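(* In the setting below, let $N=\lim_{t\to\infty}(S+tP)^{-1}$ for a signless Laplacian $P$ with graph $G$, and let $G_1,\dots,G_k$ be the connected components of $G$. For $i,j\in\{1,\dots,k\}$ let $N[i,j]$ be the submatrix of $N$ with rows indexed by the vertices of $G_i$ and columns indexed by the vertices of $G_j$. Then: (1) within each block $N[i,j]$ all entries are equal up to sign; (2) if $G_i$ is not bipartite then $N[i,j]=N[j,i]=0$ for all $j$; in particular $N=0$ if and only if no component of $G$ is bipartite; (3) if $G_i$ is bipartite with classes of sizes $p_i,q_i$ and $G_j$ is bipartite with classes of sizes $p_j,q_j$, then, ordering the vertices of each of $G_i,G_j$ so that the class of size $p$ comes first, $$N[i,j]=c_{ij}\begin{pmatrix}\mathbf{1}_{p_i}\mathbf{1}_{p_j}^\top&-\mathbf{1}_{p_i}\mathbf{1}_{q_j}^\top\\-\mathbf{1}_{q_i}\mathbf{1}_{p_j}^\top&\mathbf{1}_{q_i}\mathbf{1}_{q_j}^\top\end{pmatrix}$$ for some constant $c_{ij}\in\mathbb{R}$.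
   Context: Let $n\ge3$, $\ell>0$, $\alpha\ge(n-2)\ell$, and $S=\alpha I_n+\ell\mathbf{1}_n\mathbf{1}_n^\top$. For a real matrix $P$, $\Delta_i(P)=|P_{ii}|-\sum_{j\ne i}|P_{ij}|$. A signless Laplacian is a real symmetric $n\times n$ matrix $P$ with $P_{ij}\in\{0,1\}$ for $i\ne j$, $P_{ii}\ge 0$, and $\Delta_i(P)\in\{0,2\}$ for all $i$. Its graph $G$ has vertex set $\{1,\dots,n\}$, an edge $\{i,j\}$ ($i\ne j$) whenever $P_{ij}=1$, and a self-loop $\{i,i\}$ whenever $\Delta_i(P)=2$. A graph with a self-loop is not bipartite. The limit $N$ exists. *)

theory Defs
  imports "HOL-Analysis.Analysis"
begin

definition Delta :: "real^'n^'n \<Rightarrow> 'n \<Rightarrow> real" where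
  "Delta P i = \<bar>P$i$i\<bar> - (\<Sum>j\<in>UNIV - {i}. \<bar>P$i$j\<bar>)"

definition signless_laplacian :: "real^'n^'n \<Rightarrow> bool" where
  "signless_laplacian P \<longleftrightarrow>
     transpose P = P \<and>
     (\<forall>i j. i \<noteq> j \<longrightarrow> P$i$j = 0 \<or> P$i$j = 1) \<and>
     (\<forall>i. P$i$i \<ge> 0) \<and>
     (\<forall>i. Delta P i = 0 \<or> Delta P i = 2)"

definition adj :: "real^'n^'n \<Rightarrow> 'n \<Rightarrow> 'n \<Rightarrow> bool" where
  "adj P i j \<longleftrightarrow> i \<noteq> j \<and> P$i$j = 1"

text \<open>Self-loop at i.\<close>
definition has_loop :: "real^'n^'n \<Rightarrow> 'n \<Rightarrow> bool" where
  "has_loop P i \<longleftrightarrow> Delta P i = 2"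

definition component :: "real^'n^'n \<Rightarrow> 'n \<Rightarrow> 'n set" where
  "component P u = {v. (u, v) \<in> {(a, b). adj P a b}\<^sup>*}"

definition is_component :: "real^'n^'n \<Rightarrow> 'n set \<Rightarrow> bool" where
  "is_component P C \<longleftrightarrow> (\<exists>u. C = component P u)"

definition bipartition :: "real^'n^'n \<Rightarrow> 'n set \<Rightarrow> 'n set \<Rightarrow> 'n set \<Rightarrow> bool" where
  "bipartition P C A B \<longleftrightarrow>
     A \<union> B = C \<and> A \<inter> B = {} \<and>
     (\<forall>x\<in>C. \<not> has_loop P x) \<and>
     (\<forall>x\<in>C. \<forall>y\<in>C. adj P x y \<longrightarrow> (x \<in> A \<longleftrightarrow> y \<in> B))"

definition bipartite_on :: "real^'n^'n \<Rightarrow> 'n set \<Rightarrow> bool" where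
  "bipartite_on P C \<longleftrightarrow> (\<exists>A B. bipartition P C A B)"

definition Smat :: "real \<Rightarrow> real \<Rightarrow> real^'n^'n" where
  "Smat \<alpha> l = (\<chi> i j. (if i = j then \<alpha> else 0) + l)"

end

theory Submission
  imports Defs
begin

text \<open>
  Analytically: \<open>S\<close> is positive definite and \<open>P\<close>
  positive semidefinite, so \<open>S + t P\<close> is invertible for \<open>t \<ge> 0\<close>; passing to the limit in
  \<open>(S + t P) R t = R t (S + t P) = I\<close> after dividing by \<open>t\<close> gives \<open>P N = N P = 0\<close>, and every
  left null vector \<open>x\<close> of \<open>P\<close> satisfies \<open>x = (x S) N\<close>.  Combinatorially: writing \<open>x \<bullet> P x\<close> as
  a sum of squares \<open>(x\<^sub>i + x\<^sub>j)\<^sup>2\<close> over edges and \<open>x\<^sub>i\<^sup>2\<close> over self-loops shows that a null vector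
  of \<open>P\<close> alternates in sign along edges and vanishes at loops; hence on each component it is
  zero (non-bipartite case) or a multiple of the \<open>\<plusminus>1\<close> colour pattern (bipartite case), and
  these patterns are themselves null vectors.
\<close>

lemma tendsto_matrix_mult [tendsto_intros]:
  fixes R :: "'a \<Rightarrow> real^'m^'n" and G :: "'a \<Rightarrow> real^'k^'m"
  assumes "(R \<longlongrightarrow> N) F" and "(G \<longlongrightarrow> H) F"
  shows "((\<lambda>t. R t ** G t) \<longlongrightarrow> N ** H) F"
  unfolding matrix_matrix_mult_def by (intro tendsto_intros assms)

lemma tendsto_vector_matrix_mult [tendsto_intros]:
  fixes x :: "'a \<Rightarrow> real^'n" and R :: "'a \<Rightarrow> real^'m^'n"
  assumes "(x \<longlongrightarrow> y) F" and "(R \<longlongrightarrow> N) F"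
  shows "((\<lambda>t. x t v* R t) \<longlongrightarrow> y v* N) F"
  unfolding vector_matrix_mult_def by (intro tendsto_intros assms)

lemma tendsto_transpose [tendsto_intros]:
  fixes R :: "'a \<Rightarrow> real^'m^'n"
  assumes "(R \<longlongrightarrow> N) F"
  shows "((\<lambda>t. transpose (R t)) \<longlongrightarrow> transpose N) F"
  unfolding transpose_def by (intro tendsto_intros assms)

lemma matrix_add_rdistrib: "((A + B) ** C) = (A ** C) + (B ** (C::real^'k^'m))"
  by (simp add: matrix_matrix_mult_def vec_eq_iff sum.distrib distrib_right)

lemma invertible_matrix_inv:
  assumes "invertible (M::real^'n^'n)"
  shows "M ** matrix_inv M = mat 1" and "matrix_inv M ** M = mat 1"
  using someI_ex[OF assms[unfolded invertible_def]] unfolding matrix_inv_def by auto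

text \<open>If \<open>R t\<close> is a right inverse of \<open>S + t P\<close> for large \<open>t\<close> and \<open>R t \<longrightarrow> N\<close>, then
  \<open>P N = 0\<close>: indeed \<open>P R t = (I - S R t) / t \<longrightarrow> 0\<close>.\<close>

lemma resolvent_limit_annihilated:
  fixes S P N :: "real^'n^'n" and R :: "real \<Rightarrow> real^'n^'n"
  assumes lim: "(R \<longlongrightarrow> N) at_top"
    and inv: "\<forall>\<^sub>F t in at_top. (S + t *\<^sub>R P) ** R t = mat 1"
  shows "P ** N = 0"
proof -
  have "\<forall>\<^sub>F t in at_top. P ** R t = (1 / t) *\<^sub>R (mat 1 - S ** R t)"
    using inv eventually_gt_at_top[of 0]
  proof eventually_elim
    case (elim t)
    then have "S ** R t + t *\<^sub>R (P ** R t) = mat 1"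
      by (simp add: matrix_add_rdistrib scalar_matrix_assoc)
    then have "mat 1 - S ** R t = t *\<^sub>R (P ** R t)"
      by (simp add: algebra_simps)
    then show ?case using elim(2) by simp
  qed
  moreover have "((\<lambda>t. (1 / t) *\<^sub>R (mat 1 - S ** R t)) \<longlongrightarrow> 0 *\<^sub>R (mat 1 - S ** N)) at_top"
    by (intro tendsto_intros lim tendsto_divide_0[OF tendsto_const]
        filterlim_at_top_imp_at_infinity filterlim_ident)
  ultimately have "((\<lambda>t. P ** R t) \<longlongrightarrow> 0) at_top"
    by (simp add: tendsto_cong)
  moreover have "((\<lambda>t. P ** R t) \<longlongrightarrow> P ** N) at_top"
    by (intro tendsto_intros lim)
  ultimately show ?thesis
    using tendsto_unique[OF trivial_limit_at_top_linorder] by metis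
qed

lemma resolvent_limit_annihilated_left:
  fixes S P N :: "real^'n^'n" and R :: "real \<Rightarrow> real^'n^'n"
  assumes lim: "(R \<longlongrightarrow> N) at_top"
    and inv: "\<forall>\<^sub>F t in at_top. R t ** (S + t *\<^sub>R P) = mat 1"
  shows "N ** P = 0"
proof -
  have transpose_add: "transpose (A + B) = transpose A + transpose B" for A B :: "real^'n^'n"
    by (simp add: transpose_def vec_eq_iff)
  have "\<forall>\<^sub>F t in at_top. (transpose S + t *\<^sub>R transpose P) ** transpose (R t) = mat 1"
    using inv by eventually_elim (metis matrix_transpose_mul transpose_add transpose_scalar transpose_mat)
  then have "transpose P ** transpose N = 0"
    by (rule resolvent_limit_annihilated[OF tendsto_transpose[OF lim]])
  moreover have "transpose (0::real^'n^'n) = 0"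
    by (simp add: transpose_def vec_eq_iff)
  ultimately have "transpose (N ** P) = transpose 0"
    by (simp add: matrix_transpose_mul)
  then show ?thesis by simp
qed

lemma resolvent_limit_reproduces_left_kernel:
  fixes S P N :: "real^'n^'n" and R :: "real \<Rightarrow> real^'n^'n" and x :: "real^'n"
  assumes lim: "(R \<longlongrightarrow> N) at_top"
    and inv: "\<forall>\<^sub>F t in at_top. (S + t *\<^sub>R P) ** R t = mat 1"
    and ker: "x v* P = 0"
  shows "x = (x v* S) v* N"
proof -
  have "\<forall>\<^sub>F t in at_top. (x v* S) v* R t = x"
    using inv
  proof eventually_elim
    case (elim t)
    have "(x v* S) v* R t = (x v* (S + t *\<^sub>R P)) v* R t"
      using ker by (simp add: vector_matrix_mult_add_rdistrib vector_scaleR_matrix_ac)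
    also have "\<dots> = x"
      using elim by (simp add: vector_matrix_mul_assoc)
    finally show ?case .
  qed
  then have "((\<lambda>t. (x v* S) v* R t) \<longlongrightarrow> x) at_top"
    by (simp add: tendsto_eventually)
  moreover have "((\<lambda>t. (x v* S) v* R t) \<longlongrightarrow> (x v* S) v* N) at_top"
    by (intro tendsto_intros lim)
  ultimately show ?thesis
    using tendsto_unique[OF trivial_limit_at_top_linorder] by metis
qed

lemma invertible_posdef_plus_semidef:
  fixes S P :: "real^'n^'n"
  assumes S: "\<And>x. x \<noteq> 0 \<Longrightarrow> x \<bullet> (S *v x) > 0"
    and P: "\<And>x. x \<bullet> (P *v x) \<ge> 0" and t: "t \<ge> 0"
  shows "invertible (S + t *\<^sub>R P)"
  unfolding invertible_left_inverse matrix_left_invertible_ker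
proof (intro allI impI)
  fix x assume "(S + t *\<^sub>R P) *v x = 0"
  then have "x \<bullet> (S *v x) + t * (x \<bullet> (P *v x)) = 0"
    by (metis inner_add_right inner_scaleR_right inner_zero_right
        matrix_vector_mult_add_rdistrib scaleR_matrix_vector_assoc)
  moreover have "t * (x \<bullet> (P *v x)) \<ge> 0" using P t by simp
  ultimately show "x = 0" using S by force
qed

lemma inner_matrix_vector:
  "x \<bullet> (A *v x) = (\<Sum>i\<in>UNIV. x$i * (\<Sum>j\<in>UNIV. A$i$j * x$j))" for x :: "real^'n"
  by (simp add: inner_vec_def matrix_vector_mult_def)

lemma Smat_quadratic_form:
  fixes x :: "real^'n"
  shows "x \<bullet> (Smat \<alpha> l *v x) = \<alpha> * (x \<bullet> x) + l * (\<Sum>i\<in>UNIV. x$i)^2"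
proof -
  have "Smat \<alpha> l *v x = \<alpha> *\<^sub>R x + (\<chi> i. l * (\<Sum>j\<in>UNIV. x$j))"
    by (simp add: Smat_def matrix_vector_mult_def vec_eq_iff distrib_right sum.distrib
        sum_distrib_left if_distrib[of "\<lambda>a. a * _"] cong: if_cong)
  then show ?thesis
    by (simp add: inner_add_right inner_vec_def sum_distrib_left sum_distrib_right sum.distrib power2_eq_square
        algebra_simps)
qed

lemma Smat_positive_definite:
  fixes x :: "real^'n"
  assumes "\<alpha> > 0" "l \<ge> 0" "x \<noteq> 0"
  shows "x \<bullet> (Smat \<alpha> l *v x) > 0"
  unfolding Smat_quadratic_form using assms by (simp add: add_pos_nonneg)

lemma signless_laplacian_symmetric:
  "signless_laplacian P \<Longrightarrow> P$j$i = P$i$j"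
  unfolding signless_laplacian_def by (metis transpose_def vec_lambda_beta)

lemma signless_laplacian_offdiag:
  "signless_laplacian P \<Longrightarrow> i \<noteq> j \<Longrightarrow> P$i$j = 0 \<or> P$i$j = 1"
  unfolding signless_laplacian_def by blast

lemma signless_laplacian_offdiag_nonneg:
  "signless_laplacian P \<Longrightarrow> i \<noteq> j \<Longrightarrow> P$i$j \<ge> 0"
  using signless_laplacian_offdiag by fastforce

lemma signless_laplacian_Delta:
  "signless_laplacian P \<Longrightarrow> Delta P i = 0 \<or> Delta P i = 2"
  unfolding signless_laplacian_def by blast

lemma signless_laplacian_Delta_nonneg:
  "signless_laplacian P \<Longrightarrow> Delta P i \<ge> 0"
  using signless_laplacian_Delta[of P i] by auto

text \<open>Since off-diagonal entries are nonnegative, the diagonal entry is \<open>Delta\<close> plus the degree.\<close>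

lemma signless_laplacian_diagonal:
  assumes SL: "signless_laplacian P"
  shows "P$i$i = Delta P i + (\<Sum>j\<in>UNIV. if j = i then 0 else P$i$j)"
proof -
  have "P$i$i \<ge> 0" using SL unfolding signless_laplacian_def by blast
  moreover have "(\<Sum>j\<in>UNIV - {i}. \<bar>P$i$j\<bar>) = (\<Sum>j\<in>UNIV - {i}. P$i$j)"
    by (rule sum.cong) (auto intro!: abs_of_nonneg signless_laplacian_offdiag_nonneg[OF SL])
  moreover have "(\<Sum>j\<in>UNIV - {i}. P$i$j) = (\<Sum>j\<in>UNIV. if j = i then 0 else P$i$j)"
    by (simp add: sum.If_cases Diff_eq Compl_eq)
  ultimately show ?thesis unfolding Delta_def by simp
qed

lemma sum_split_diagonal:
  "(\<Sum>j\<in>UNIV. f j) = f i + (\<Sum>j\<in>UNIV. if j = i then 0 else f j)"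
  for f :: "'n::finite \<Rightarrow> real"
  by (simp add: sum.If_cases Diff_eq Compl_eq sum.remove[of UNIV i, simplified])

text \<open>The key identity: \<open>x \<bullet> P x\<close> is the sum of \<open>Delta P i * x\<^sub>i\<^sup>2\<close> over all vertices plus
  half the sum of \<open>P\<^sub>i\<^sub>j (x\<^sub>i + x\<^sub>j)\<^sup>2\<close> over ordered pairs \<open>i \<noteq> j\<close>, a sum of nonnegative terms
  (edges contribute \<open>(x\<^sub>i + x\<^sub>j)\<^sup>2\<close>, self-loops contribute \<open>2 x\<^sub>i\<^sup>2\<close>).\<close>

lemma signless_laplacian_quadratic_form:
  fixes P :: "real^'n^'n" and x :: "real^'n"
  assumes SL: "signless_laplacian P"
  shows "x \<bullet> (P *v x) = (\<Sum>i\<in>UNIV. Delta P i * (x$i)^2)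
           + (\<Sum>i\<in>UNIV. \<Sum>j\<in>UNIV. if j = i then 0 else P$i$j * (x$i + x$j)^2) / 2"
proof -
  define T where "T = (\<Sum>i\<in>UNIV. \<Sum>j\<in>UNIV. if j = i then 0 else P$i$j * ((x$i)^2 + x$i * x$j))"
  have row: "x$i * (\<Sum>j\<in>UNIV. P$i$j * x$j) = Delta P i * (x$i)^2
               + (\<Sum>j\<in>UNIV. if j = i then 0 else P$i$j * ((x$i)^2 + x$i * x$j))" for i
  proof -
    have "(\<Sum>j\<in>UNIV. P$i$j * x$j) = P$i$i * x$i + (\<Sum>j\<in>UNIV. if j = i then 0 else P$i$j * x$j)"
      by (rule sum_split_diagonal)
    also have "\<dots> = Delta P i * x$i + (\<Sum>j\<in>UNIV. if j = i then 0 else P$i$j * x$i)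
                      + (\<Sum>j\<in>UNIV. if j = i then 0 else P$i$j * x$j)"
      by (subst signless_laplacian_diagonal[OF SL])
        (simp add: algebra_simps sum_distrib_left sum_distrib_right if_distrib cong: if_cong)
    finally show ?thesis
      by (simp add: algebra_simps power2_eq_square sum_distrib_left sum.distrib[symmetric]
          if_distrib cong: if_cong)
  qed
  text \<open>By symmetry of \<open>P\<close>, the off-diagonal part of the form may be written with either endpoint squared.\<close>
  have T_swapped: "T = (\<Sum>i\<in>UNIV. \<Sum>j\<in>UNIV. if j = i then 0 else P$i$j * ((x$j)^2 + x$i * x$j))"
    unfolding T_def
    by (subst sum.swap, intro sum.cong refl) (auto simp: signless_laplacian_symmetric[OF SL] algebra_simps)
  have "(\<Sum>i\<in>UNIV. \<Sum>j\<in>UNIV. if j = i then 0 else P$i$j * (x$i + x$j)^2) = T + T"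
    by (subst T_def, subst T_swapped)
      (simp add: sum.distrib[symmetric] power2_eq_square algebra_simps if_distrib cong: if_cong)
  moreover have "x \<bullet> (P *v x) = (\<Sum>i\<in>UNIV. Delta P i * (x$i)^2) + T"
    unfolding inner_matrix_vector T_def row by (simp add: sum.distrib)
  ultimately show ?thesis by simp
qed

lemma signless_laplacian_positive_semidefinite:
  fixes P :: "real^'n^'n" and x :: "real^'n"
  assumes SL: "signless_laplacian P"
  shows "x \<bullet> (P *v x) \<ge> 0"
  unfolding signless_laplacian_quadratic_form[OF SL]
  by (intro add_nonneg_nonneg divide_nonneg_pos sum_nonneg mult_nonneg_nonneg
      signless_laplacian_Delta_nonneg[OF SL])
    (auto intro!: mult_nonneg_nonneg signless_laplacian_offdiag_nonneg[OF SL])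

text \<open>Consequently a null vector of \<open>P\<close> changes sign along every edge and vanishes at every
  self-loop, since each term of the identity above must vanish.\<close>

lemma signless_laplacian_kernel:
  fixes P :: "real^'n^'n" and x :: "real^'n"
  assumes SL: "signless_laplacian P" and K: "P *v x = 0"
  shows kernel_edge: "adj P a b \<Longrightarrow> x$a + x$b = 0"
    and kernel_loop: "has_loop P a \<Longrightarrow> x$a = 0"
proof -
  define D where "D i = Delta P i * (x$i)^2" for i
  define E where "E i j = (if j = i then 0 else P$i$j * (x$i + x$j)^2)" for i j
  have D_nonneg: "D i \<ge> 0" for i
    unfolding D_def by (simp add: signless_laplacian_Delta_nonneg[OF SL])
  have E_nonneg: "E i j \<ge> 0" for i j
    unfolding E_def by (simp add: signless_laplacian_offdiag_nonneg[OF SL])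
  have "(\<Sum>i\<in>UNIV. D i) + (\<Sum>i\<in>UNIV. \<Sum>j\<in>UNIV. E i j) / 2 = 0"
    using signless_laplacian_quadratic_form[OF SL, of x] K unfolding D_def E_def by simp
  moreover have "(\<Sum>i\<in>UNIV. D i) \<ge> 0" "(\<Sum>i\<in>UNIV. \<Sum>j\<in>UNIV. E i j) \<ge> 0"
    using D_nonneg E_nonneg by (simp_all add: sum_nonneg)
  ultimately have "(\<Sum>i\<in>UNIV. D i) = 0" "(\<Sum>i\<in>UNIV. \<Sum>j\<in>UNIV. E i j) = 0"
    by linarith+
  then have D_zero: "D i = 0" and E_zero: "E i j = 0" for i j
    using D_nonneg E_nonneg by (simp_all add: sum_nonneg_eq_0_iff sum_nonneg)
  show "adj P a b \<Longrightarrow> x$a + x$b = 0"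
    using E_zero[of a b] unfolding E_def adj_def by auto
  show "has_loop P a \<Longrightarrow> x$a = 0"
    using D_zero[of a] unfolding D_def has_loop_def by simp
qed

abbreviation reachable :: "real^'n^'n \<Rightarrow> 'n \<Rightarrow> 'n \<Rightarrow> bool" where
  "reachable P u v \<equiv> (u, v) \<in> {(a, b). adj P a b}\<^sup>*"

lemma adj_sym: "signless_laplacian P \<Longrightarrow> adj P a b \<Longrightarrow> adj P b a"
  unfolding adj_def using signless_laplacian_symmetric by metis

lemma reachable_sym:
  assumes "signless_laplacian P" and "reachable P u v"
  shows "reachable P v u"
proof -
  have "sym ({(a, b). adj P a b}\<^sup>*)"
    by (rule sym_rtrancl) (auto simp: sym_def intro: adj_sym[OF assms(1)])
  then show ?thesis using assms(2) unfolding sym_def by blast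
qed

lemma component_self: "u \<in> component P u" "is_component P (component P u)"
  unfolding component_def is_component_def by auto

lemma component_closed:
  assumes "is_component P C" and "u \<in> C" and "reachable P u v"
  shows "v \<in> C"
  using assms unfolding is_component_def component_def by (auto intro: rtrancl_trans)

lemma component_reachable:
  assumes SL: "signless_laplacian P" and "is_component P C" and "u \<in> C" and "v \<in> C"
  shows "reachable P u v"
proof -
  obtain w where "C = component P w" using assms(2) unfolding is_component_def by blast
  then have "reachable P w u" "reachable P w v" using assms(3,4) unfolding component_def by auto
  then show ?thesis by (meson reachable_sym[OF SL] rtrancl_trans)
qed

definition side_sign :: "'n set \<Rightarrow> 'n \<Rightarrow> real" where
  "side_sign A v = (if v \<in> A then 1 else -1)"

lemma side_sign_square: "side_sign A v * side_sign A v = 1"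
  unfolding side_sign_def by simp

lemma bipartition_edge_sign:
  assumes "bipartition P C A B" and "x \<in> C" and "y \<in> C" and "adj P x y"
  shows "side_sign A y = - side_sign A x"
  using assms unfolding bipartition_def side_sign_def by auto

text \<open>Along a walk a null vector of \<open>P\<close> alternates in sign, so \<open>|x|\<close> is constant on components.\<close>

lemma kernel_abs_reachable:
  assumes SL: "signless_laplacian P" and K: "P *v x = 0" and "reachable P u v"
  shows "\<bar>x$v\<bar> = \<bar>x$u\<bar>"
  using assms(3)
proof (induction rule: rtrancl_induct)
  case (step y z)
  then have "x$y + x$z = 0" using kernel_edge[OF SL K] by auto
  then show ?case using step.IH by auto
qed simp

lemma kernel_on_bipartite_component:
  assumes SL: "signless_laplacian P" and K: "P *v x = 0"
    and C: "is_component P C" and BP: "bipartition P C A B" and u: "u \<in> C" and v: "v \<in> C"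
  shows "x$v = side_sign A u * side_sign A v * x$u"
proof -
  have "x$w * side_sign A w = x$u * side_sign A u" if "reachable P u w" for w
    using that
  proof (induction rule: rtrancl_induct)
    case (step y z)
    have y: "y \<in> C" using component_closed[OF C u step.hyps(1)] .
    have yz: "adj P y z" using step.hyps(2) by simp
    then have z: "z \<in> C" using component_closed[OF C y] by auto
    have "x$z = - x$y" using kernel_edge[OF SL K yz] by simp
    moreover have "side_sign A z = - side_sign A y" using bipartition_edge_sign[OF BP y z yz] .
    ultimately show ?case using step.IH by simp
  qed simp
  then have "x$v * side_sign A v = x$u * side_sign A u"
    using component_reachable[OF SL C u v] .
  then show ?thesis
    by (metis side_sign_square mult.assoc mult.commute mult.left_neutral)
qed

text \<open>On a non-bipartite component a null vector vanishes: otherwise the signs of \<open>x\<close> would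
  two-colour the component.\<close>

lemma kernel_vanishes_nonbipartite:
  assumes SL: "signless_laplacian P" and K: "P *v x = 0"
    and C: "is_component P C" and NB: "\<not> bipartite_on P C" and u: "u \<in> C"
  shows "x$u = 0"
proof (rule ccontr)
  assume nz: "x$u \<noteq> 0"
  have abs_eq: "\<bar>x$v\<bar> = \<bar>x$u\<bar>" if "v \<in> C" for v
    using kernel_abs_reachable[OF SL K component_reachable[OF SL C u that]] .
  have "bipartition P C {v\<in>C. x$v = x$u} {v\<in>C. x$v = - x$u}"
    unfolding bipartition_def
  proof (intro conjI ballI impI)
    show "{v\<in>C. x$v = x$u} \<union> {v\<in>C. x$v = - x$u} = C"
      using abs_eq by (auto simp: abs_eq_iff)
    show "{v\<in>C. x$v = x$u} \<inter> {v\<in>C. x$v = - x$u} = {}"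
      using nz by auto
    fix v assume v: "v \<in> C"
    show "\<not> has_loop P v"
      using kernel_loop[OF SL K] abs_eq[OF v] nz by force
    fix w assume "w \<in> C" and "adj P v w"
    then show "v \<in> {v\<in>C. x$v = x$u} \<longleftrightarrow> w \<in> {v\<in>C. x$v = - x$u}"
      using kernel_edge[OF SL K] v by force
  qed
  then show False using NB unfolding bipartite_on_def by blast
qed

lemma bipartite_sign_vector_in_kernel:
  fixes P :: "real^'n^'n"
  assumes SL: "signless_laplacian P" and C: "is_component P C" and BP: "bipartition P C A B"
  shows "P *v (\<chi> v. if v \<in> C then side_sign A v else 0) = 0"
proof -
  define s :: "real^'n" where "s = (\<chi> v. if v \<in> C then side_sign A v else 0)"
  text \<open>Each neighbour of \<open>i\<close> carries the opposite sign of \<open>i\<close> (both are \<open>0\<close> outside \<open>C\<close>).\<close>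
  have offdiag: "P$i$j * s$j = - s$i * P$i$j" if "j \<noteq> i" for i j
  proof (cases "P$i$j = 0")
    case False
    then have ij: "adj P i j"
      using signless_laplacian_offdiag[OF SL, of i j] that unfolding adj_def by auto
    have "i \<in> C \<longleftrightarrow> j \<in> C"
      using component_closed[OF C, of i j] component_closed[OF C, of j i] ij adj_sym[OF SL ij]
      by auto
    then show ?thesis
    proof (cases "i \<in> C")
      case True
      then have "side_sign A j = - side_sign A i"
        using bipartition_edge_sign[OF BP _ _ ij] \<open>i \<in> C \<longleftrightarrow> j \<in> C\<close> by blast
      then show ?thesis using True \<open>i \<in> C \<longleftrightarrow> j \<in> C\<close> unfolding s_def by simp
    qed (simp add: s_def)
  qed simp
  text \<open>Vertices of \<open>C\<close> carry no loop, so their diagonal entry is their degree.\<close>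
  have diag: "P$i$i * s$i = s$i * (\<Sum>j\<in>UNIV. if j = i then 0 else P$i$j)" for i
  proof (cases "i \<in> C")
    case True
    then have "\<not> has_loop P i" using BP unfolding bipartition_def by blast
    then have "Delta P i = 0"
      using signless_laplacian_Delta[OF SL, of i] unfolding has_loop_def by simp
    then show ?thesis using signless_laplacian_diagonal[OF SL, of i] by simp
  qed (simp add: s_def)
  have "(P *v s)$i = 0" for i
  proof -
    have "(P *v s)$i = (\<Sum>j\<in>UNIV. P$i$j * s$j)"
      by (simp add: matrix_vector_mult_def)
    also have "\<dots> = P$i$i * s$i + (\<Sum>j\<in>UNIV. if j = i then 0 else P$i$j * s$j)"
      by (rule sum_split_diagonal)
    also have "(\<Sum>j\<in>UNIV. if j = i then 0 else P$i$j * s$j)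
             = - s$i * (\<Sum>j\<in>UNIV. if j = i then 0 else P$i$j)"
      unfolding sum_distrib_left by (rule sum.cong) (simp_all add: offdiag)
    finally show ?thesis by (simp add: diag)
  qed
  then show ?thesis unfolding s_def by (simp add: vec_eq_iff)
qed

lemma kernel_columns_rows:
  fixes P N :: "real^'n^'n"
  assumes sym: "transpose P = P" and PN: "P ** N = 0" and NP: "N ** P = 0"
  shows "P *v column v N = 0" and "P *v row u N = 0"
proof -
  have "P *v column v N = column v (P ** N)"
    by (simp add: matrix_matrix_mult_def matrix_vector_mult_def column_def vec_eq_iff)
  then show "P *v column v N = 0" using PN by (simp add: column_def vec_eq_iff)
  have "P *v row u N = row u N v* transpose P"
    by simp
  also have "\<dots> = row u (N ** P)"
    by (simp add: sym matrix_matrix_mult_def vector_matrix_mult_def row_def vec_eq_iff)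
  finally show "P *v row u N = 0" using NP by (simp add: row_def vec_eq_iff)
qed

lemma block_abs_constant:
  fixes P N :: "real^'n^'n"
  assumes SL: "signless_laplacian P"
    and col: "\<And>v. P *v column v N = 0" and row: "\<And>u. P *v row u N = 0"
    and Ci: "is_component P Ci" and Cj: "is_component P Cj"
    and "u \<in> Ci" "u' \<in> Ci" "v \<in> Cj" "v' \<in> Cj"
  shows "\<bar>N$u$v\<bar> = \<bar>N$u'$v'\<bar>"
proof -
  have "\<bar>N$u'$v\<bar> = \<bar>N$u$v\<bar>"
    using kernel_abs_reachable[OF SL col component_reachable[OF SL Ci \<open>u \<in> Ci\<close> \<open>u' \<in> Ci\<close>]]
    by (simp add: column_def)
  moreover have "\<bar>N$u'$v'\<bar> = \<bar>N$u'$v\<bar>"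
    using kernel_abs_reachable[OF SL row component_reachable[OF SL Cj \<open>v \<in> Cj\<close> \<open>v' \<in> Cj\<close>]]
    by (simp add: row_def)
  ultimately show ?thesis by simp
qed

lemma block_vanishes_nonbipartite:
  fixes P N :: "real^'n^'n"
  assumes SL: "signless_laplacian P"
    and col: "\<And>v. P *v column v N = 0" and row: "\<And>u. P *v row u N = 0"
    and C: "is_component P C" and NB: "\<not> bipartite_on P C" and u: "u \<in> C"
  shows "N$u$v = 0" and "N$v$u = 0"
  using kernel_vanishes_nonbipartite[OF SL col C NB u]
    kernel_vanishes_nonbipartite[OF SL row C NB u]
  by (simp_all add: column_def row_def)

lemma block_signed_constant:
  fixes P N :: "real^'n^'n"
  assumes SL: "signless_laplacian P"
    and col: "\<And>v. P *v column v N = 0" and row: "\<And>u. P *v row u N = 0"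
    and Ci: "is_component P Ci" and Cj: "is_component P Cj"
    and Bi: "bipartition P Ci Ai Bi" and Bj: "bipartition P Cj Aj Bj"
  shows "\<exists>c. \<forall>u\<in>Ci. \<forall>v\<in>Cj. N$u$v = c * side_sign Ai u * side_sign Aj v"
proof -
  obtain u0 v0 where u0: "u0 \<in> Ci" and v0: "v0 \<in> Cj"
    using Ci Cj component_self unfolding is_component_def by blast
  have "N$u$v = (side_sign Ai u0 * side_sign Aj v0 * N$u0$v0) * side_sign Ai u * side_sign Aj v"
    if u: "u \<in> Ci" and v: "v \<in> Cj" for u v
  proof -
    have "N$u$v = side_sign Ai u0 * side_sign Ai u * N$u0$v"
      using kernel_on_bipartite_component[OF SL col Ci Bi u0 u] by (simp add: column_def)
    also have "N$u0$v = side_sign Aj v0 * side_sign Aj v * N$u0$v0"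
      using kernel_on_bipartite_component[OF SL row Cj Bj v0 v] by (simp add: row_def)
    finally show ?thesis by (simp add: ac_simps)
  qed
  then show ?thesis by blast
qed

text \<open>\<open>N\<close> vanishes iff no component is bipartite; the nontrivial direction uses that \<open>N\<close>
  reproduces every null vector of \<open>P\<close>.\<close>

lemma block_zero_iff:
  fixes P N S :: "real^'n^'n"
  assumes SL: "signless_laplacian P"
    and col: "\<And>v. P *v column v N = 0"
    and reproduce: "\<And>x. P *v x = 0 \<Longrightarrow> x = (x v* S) v* N"
  shows "N = 0 \<longleftrightarrow> (\<forall>C. is_component P C \<longrightarrow> \<not> bipartite_on P C)"
proof
  assume N0: "N = 0"
  show "\<forall>C. is_component P C \<longrightarrow> \<not> bipartite_on P C"
  proof (intro allI impI notI)
    fix C assume C: "is_component P C" and "bipartite_on P C"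
    then obtain A B where BP: "bipartition P C A B" unfolding bipartite_on_def by blast
    obtain w where w: "w \<in> C" using C component_self unfolding is_component_def by blast
    define s :: "real^'n" where "s = (\<chi> v. if v \<in> C then side_sign A v else 0)"
    have "P *v s = 0" unfolding s_def by (rule bipartite_sign_vector_in_kernel[OF SL C BP])
    then have "s = 0" using reproduce N0 by simp
    then show False using w unfolding s_def side_sign_def by (auto simp: vec_eq_iff split: if_splits)
  qed
next
  assume "\<forall>C. is_component P C \<longrightarrow> \<not> bipartite_on P C"
  then have "N$u$v = 0" for u v
    using kernel_vanishes_nonbipartite[OF SL col component_self(2) _ component_self(1)]
      component_self(2)[of P] by (simp add: column_def)
  then show "N = 0" by (simp add: vec_eq_iff)
qed

theorem corollary4p4:
  fixes P N :: "real^'n^'n" and \<alpha> l :: real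
  assumes n3: "CARD('n) \<ge> 3"
    and l_pos: "l > 0"
    and alpha: "\<alpha> \<ge> (real CARD('n) - 2) * l"
    and SL: "signless_laplacian P"
    and lim: "((\<lambda>t. matrix_inv (Smat \<alpha> l + t *\<^sub>R P)) \<longlongrightarrow> N) at_top"
  shows
    "(\<forall>Ci Cj. is_component P Ci \<longrightarrow> is_component P Cj \<longrightarrow>
        (\<forall>u\<in>Ci. \<forall>u'\<in>Ci. \<forall>v\<in>Cj. \<forall>v'\<in>Cj. \<bar>N$u$v\<bar> = \<bar>N$u'$v'\<bar>))
     \<and> (\<forall>Ci. is_component P Ci \<longrightarrow> \<not> bipartite_on P Ci \<longrightarrow>
        (\<forall>u\<in>Ci. \<forall>v. N$u$v = 0 \<and> N$v$u = 0))
     \<and> (N = 0 \<longleftrightarrow> (\<forall>C. is_component P C \<longrightarrow> \<not> bipartite_on P C))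
     \<and> (\<forall>Ci Cj Ai Bi Aj Bj. is_component P Ci \<longrightarrow> is_component P Cj \<longrightarrow>
        bipartition P Ci Ai Bi \<longrightarrow> bipartition P Cj Aj Bj \<longrightarrow>
        (\<exists>c::real. \<forall>u\<in>Ci. \<forall>v\<in>Cj.
            N$u$v = c * (if u \<in> Ai then 1 else -1) * (if v \<in> Aj then 1 else -1)))"
proof -
  define S :: "real^'n^'n" where "S = Smat \<alpha> l"
  define R where "R t = matrix_inv (S + t *\<^sub>R P)" for t
  have lim_R: "(R \<longlongrightarrow> N) at_top" using lim unfolding R_def S_def .
  have "(real CARD('n) - 2) * l \<ge> l" using n3 l_pos by simp
  then have "\<alpha> > 0" using alpha l_pos by linarith
  then have inv: "invertible (S + t *\<^sub>R P)" if "t \<ge> 0" for t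
    using invertible_posdef_plus_semidef[OF Smat_positive_definite
        signless_laplacian_positive_semidefinite[OF SL] that] l_pos unfolding S_def by simp
  have right: "\<forall>\<^sub>F t in at_top. (S + t *\<^sub>R P) ** R t = mat 1"
    and left: "\<forall>\<^sub>F t in at_top. R t ** (S + t *\<^sub>R P) = mat 1"
    using eventually_ge_at_top[of "0::real"]
    by (eventually_elim, simp add: R_def invertible_matrix_inv inv)+
  have sym: "transpose P = P" using SL unfolding signless_laplacian_def by blast
  note kernel = kernel_columns_rows[OF sym resolvent_limit_annihilated[OF lim_R right]
      resolvent_limit_annihilated_left[OF lim_R left]]
  have reproduce: "x = (x v* S) v* N" if "P *v x = 0" for x
    using resolvent_limit_reproduces_left_kernel[OF lim_R right] that sym
    by (metis transpose_matrix_vector)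
  show ?thesis
    unfolding side_sign_def[symmetric]
  proof (intro conjI allI impI ballI)
    show "\<bar>N$u$v\<bar> = \<bar>N$u'$v'\<bar>"
      if "is_component P Ci" "is_component P Cj" "u \<in> Ci" "u' \<in> Ci" "v \<in> Cj" "v' \<in> Cj"
      for Ci Cj u u' v v'
      using block_abs_constant[OF SL kernel that] .
    show "N$u$v = 0" "N$v$u = 0"
      if "is_component P C" "\<not> bipartite_on P C" "u \<in> C" for C u v
      using block_vanishes_nonbipartite[OF SL kernel that] .
    show "N = 0 \<longleftrightarrow> (\<forall>C. is_component P C \<longrightarrow> \<not> bipartite_on P C)"
      using block_zero_iff[OF SL kernel(1) reproduce] .
    show "\<exists>c. \<forall>u\<in>Ci. \<forall>v\<in>Cj. N$u$v = c * side_sign Ai u * side_sign Aj v"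
      if "is_component P Ci" "is_component P Cj" "bipartition P Ci Ai Bi" "bipartition P Cj Aj Bj"
      for Ci Cj Ai Bi Aj Bj
      using block_signed_constant[OF SL kernel that] .
  qed
qed

end
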